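(* To first order in $\theta$, with $\phi_2=\partial_i\pi^i-J^0+\tfrac12\theta^{kl}\partial_l(A_kJ^0)$ and $\Phi_3^{\rm cand}=-C+\theta^{li}(\partial_iJ^0)\partial_lA_0+\theta^{li}\partial_i(J^k\partial_lA_k)-\tfrac12\theta^{il}\partial_i(A_lC)$, $C:=\partial_\mu J^\mu$, one has $$\{\phi_2(x),\Phi_3^{\rm cand}(y)\}=\Sigma^{lk}(y)\,\partial^y_l\partial^y_k\delta^3(x-y)-\tfrac12\theta^{il}(\partial_iC)(y)\,\partial^y_l\delta^3(x-y),$$ where $\Sigma^{lk}:=\tfrac12\bigl(\theta^{li}\partial_iJ^k+\theta^{ki}\partial_iJ^l\bigr)$.
   Context: Greek indices $0..3$, Latin indices $1..3$, summation convention. $\theta^{ij}$ constant antisymmetric (with $\theta^{0i}=0$). $J^\mu$ a prescribed smooth external current, not assumed conserved. Canonical fields $A_\mu,\pi^\mu$ with $\{A_\mu(x),\pi^\nu(y)\}=\delta^\nu_\mu\delta^3(x-y)$ and all other basic brackets zero; boundary terms are discarded. *)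

theory Defs
  imports "HOL-Analysis.Analysis"
begin

text \<open>Spatial points are real^3, spacetime points are real \<times> (real^3)
  with (t, x), time direction (1,0), spatial direction i is (0, axis i 1).\<close>

definition dd :: "'a::euclidean_space \<Rightarrow> ('a \<Rightarrow> real) \<Rightarrow> 'a \<Rightarrow> real" where
  "dd v f = (\<lambda>x. frechet_derivative f (at x) v)"

definition smooth_fn :: "('a::euclidean_space \<Rightarrow> real) \<Rightarrow> bool" where
  "smooth_fn f \<longleftrightarrow> (\<forall>vs. set vs \<subseteq> Basis \<longrightarrow> (\<forall>x. foldr dd vs f differentiable (at x)))"

definition test_fn :: "('a::euclidean_space \<Rightarrow> real) \<Rightarrow> bool" where
  "test_fn h \<longleftrightarrow> smooth_fn h \<and> bounded {x. h x \<noteq> 0}"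

definition sp :: "3 \<Rightarrow> (real^3 \<Rightarrow> real) \<Rightarrow> real^3 \<Rightarrow> real" where
  "sp i f = dd (axis i 1) f"

text \<open>A phase-space point at fixed time: A_0, A_i, pi^0, pi^i as fields on R^3.\<close>
record fstate =
  fA0 :: "real^3 \<Rightarrow> real"
  fA  :: "3 \<Rightarrow> real^3 \<Rightarrow> real"
  fP0 :: "real^3 \<Rightarrow> real"
  fP  :: "3 \<Rightarrow> real^3 \<Rightarrow> real"

definition smooth_state :: "fstate \<Rightarrow> bool" where
  "smooth_state s \<longleftrightarrow> smooth_fn (fA0 s) \<and> (\<forall>i. smooth_fn (fA s i))
      \<and> smooth_fn (fP0 s) \<and> (\<forall>i. smooth_fn (fP s i))"

definition test_state :: "fstate \<Rightarrow> bool" where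
  "test_state d \<longleftrightarrow> test_fn (fA0 d) \<and> (\<forall>i. test_fn (fA d i))
      \<and> test_fn (fP0 d) \<and> (\<forall>i. test_fn (fP d i))"

definition cont_state :: "fstate \<Rightarrow> bool" where
  "cont_state s \<longleftrightarrow> continuous_on UNIV (fA0 s) \<and> (\<forall>i. continuous_on UNIV (fA s i))
      \<and> continuous_on UNIV (fP0 s) \<and> (\<forall>i. continuous_on UNIV (fP s i))"

definition shift_state :: "fstate \<Rightarrow> real \<Rightarrow> fstate \<Rightarrow> fstate" where
  "shift_state s e d =
     \<lparr> fA0 = (\<lambda>x. fA0 s x + e * fA0 d x), fA = (\<lambda>i x. fA s i x + e * fA d i x),
       fP0 = (\<lambda>x. fP0 s x + e * fP0 d x), fP = (\<lambda>i x. fP s i x + e * fP d i x) \<rparr>"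

definition pair_state :: "fstate \<Rightarrow> fstate \<Rightarrow> real" where
  "pair_state D d = integral UNIV (\<lambda>z. fA0 D z * fA0 d z + (\<Sum>i\<in>UNIV. fA D i z * fA d i z)
      + fP0 D z * fP0 d z + (\<Sum>i\<in>UNIV. fP D i z * fP d i z))"

text \<open>D collects the functional derivatives (dF/dA_0, dF/dA_i, dF/dpi^0, dF/dpi^i) of the
  functional F at s: continuous, and representing the Gateaux derivative in every test direction.\<close>
definition is_fgrad :: "(fstate \<Rightarrow> real) \<Rightarrow> fstate \<Rightarrow> fstate \<Rightarrow> bool" where
  "is_fgrad F s D \<longleftrightarrow> cont_state D \<and>
     (\<forall>d. test_state d \<longrightarrow> ((\<lambda>e. F (shift_state s e d)) has_real_derivative pair_state D d) (at 0))"

definition fgrad :: "(fstate \<Rightarrow> real) \<Rightarrow> fstate \<Rightarrow> fstate" where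
  "fgrad F s = (THE D. is_fgrad F s D)"

text \<open>Canonical Poisson bracket {F,G} = int (dF/dA_mu dG/dpi^mu - dF/dpi^mu dG/dA_mu),
  so that {A_mu(x), pi^nu(y)} = delta^nu_mu delta^3(x-y).\<close>
definition pbracket :: "(fstate \<Rightarrow> real) \<Rightarrow> (fstate \<Rightarrow> real) \<Rightarrow> fstate \<Rightarrow> real" where
  "pbracket F G s = (let DF = fgrad F s; DG = fgrad G s in
     integral UNIV (\<lambda>z. fA0 DF z * fP0 DG z - fP0 DF z * fA0 DG z
        + (\<Sum>i\<in>UNIV. fA DF i z * fP DG i z - fP DF i z * fA DG i z)))"

definition smear :: "(real^3 \<Rightarrow> real) \<Rightarrow> (fstate \<Rightarrow> real^3 \<Rightarrow> real) \<Rightarrow> fstate \<Rightarrow> real" where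
  "smear f rho s = integral UNIV (\<lambda>x. f x * rho s x)"

definition divJ :: "(real \<times> (real^3) \<Rightarrow> real) \<Rightarrow> (3 \<Rightarrow> real \<times> (real^3) \<Rightarrow> real) \<Rightarrow> real \<times> (real^3) \<Rightarrow> real" where
  "divJ J0 J q = dd (1, 0) J0 q + (\<Sum>i\<in>UNIV. dd (0, axis i 1) (J i) q)"

definition phi2 :: "real^3^3 \<Rightarrow> (real \<times> (real^3) \<Rightarrow> real) \<Rightarrow> real \<Rightarrow> fstate \<Rightarrow> real^3 \<Rightarrow> real" where
  "phi2 \<theta> J0 t s x =
     (\<Sum>i\<in>UNIV. sp i (fP s i) x) - J0 (t, x)
     + (1/2) * (\<Sum>k\<in>UNIV. \<Sum>l\<in>UNIV. \<theta> $ k $ l * sp l (\<lambda>y. fA s k y * J0 (t, y)) x)"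

definition Phi3 :: "real^3^3 \<Rightarrow> (real \<times> (real^3) \<Rightarrow> real) \<Rightarrow> (3 \<Rightarrow> real \<times> (real^3) \<Rightarrow> real)
     \<Rightarrow> real \<Rightarrow> fstate \<Rightarrow> real^3 \<Rightarrow> real" where
  "Phi3 \<theta> J0 J t s y =
     - divJ J0 J (t, y)
     + (\<Sum>l\<in>UNIV. \<Sum>i\<in>UNIV. \<theta> $ l $ i * sp i (\<lambda>z. J0 (t, z)) y * sp l (fA0 s) y)
     + (\<Sum>l\<in>UNIV. \<Sum>i\<in>UNIV. \<Sum>k\<in>UNIV.
          \<theta> $ l $ i * sp i (\<lambda>z. J k (t, z) * sp l (fA s k) z) y)
     - (1/2) * (\<Sum>i\<in>UNIV. \<Sum>l\<in>UNIV. \<theta> $ i $ l * sp i (\<lambda>z. fA s l z * divJ J0 J (t, z)) y)"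

definition Sigma :: "real^3^3 \<Rightarrow> (3 \<Rightarrow> real \<times> (real^3) \<Rightarrow> real) \<Rightarrow> real \<Rightarrow> 3 \<Rightarrow> 3 \<Rightarrow> real^3 \<Rightarrow> real" where
  "Sigma \<theta> J t l k y = (1/2) * (\<Sum>i\<in>UNIV. \<theta> $ l $ i * sp i (\<lambda>z. J k (t, z)) y
                                       + \<theta> $ k $ i * sp i (\<lambda>z. J l (t, z)) y)"

end

theory Submission
  imports Defs "HOL-Computational_Algebra.Polynomial"
begin

(* Functional derivatives are computed against test directions: the integrand of the first
   variation of a smeared constraint differs from the L2 pairing with the claimed gradient by a
   divergence of test functions, which integrates to zero, and the gradient is unique by the
   fundamental lemma of the calculus of variations (with products of the bump
   exp(-1/(1+s)) exp(-1/(1-s)) as test functions).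
   The gradient of phi2[f] has momentum components -d_i f and no A_0 or pi^0 components, while
   Phi3[g] does not depend on the momenta.  Hence the bracket is the first variation of Phi3[g]
   in the pure-gauge direction A_i = d_i f, a pointwise expression in which the contractions of
   the antisymmetric theta with second and third derivatives of f vanish by symmetry of mixed
   partials, and the remaining theta^{li} (d_i J^k) d_l d_k f symmetrises to Sigma^{lk}. *)

lemma dd_eqI: "(f has_derivative f') (at x) \<Longrightarrow> dd v f x = f' v"
  by (simp add: dd_def frechet_derivative_at[symmetric])

lemma has_derivative_dd: "f differentiable (at x) \<Longrightarrow> (f has_derivative (\<lambda>v. dd v f x)) (at x)"
  unfolding dd_def using frechet_derivative_works by metis

lemma dd_linear_direction:
  assumes "f differentiable (at x)"
  shows "dd v f x = (\<Sum>b\<in>Basis. (v \<bullet> b) * dd b f x)"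
  using Linear_Algebra.linear_componentwise[OF has_derivative_linear[OF has_derivative_dd[OF assms]], of v 1]
  by simp

definition differentiable_upto :: "nat \<Rightarrow> ('a::euclidean_space \<Rightarrow> real) \<Rightarrow> bool" where
  "differentiable_upto n f \<longleftrightarrow>
     (\<forall>vs. length vs \<le> n \<longrightarrow> set vs \<subseteq> Basis \<longrightarrow> (\<forall>x. foldr dd vs f differentiable (at x)))"

lemma smooth_fn_iff_differentiable_upto: "smooth_fn f \<longleftrightarrow> (\<forall>n. differentiable_upto n f)"
  unfolding smooth_fn_def differentiable_upto_def by blast

lemma differentiable_upto_0: "differentiable_upto 0 f \<longleftrightarrow> (\<forall>x. f differentiable (at x))"
  unfolding differentiable_upto_def by auto

lemma differentiable_upto_Suc:
  "differentiable_upto (Suc n) f \<longleftrightarrow>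
     (\<forall>x. f differentiable (at x)) \<and> (\<forall>v\<in>Basis. differentiable_upto n (dd v f))"
proof
  assume f: "differentiable_upto (Suc n) f"
  have "foldr dd vs (dd v f) differentiable (at x)"
    if "v \<in> Basis" "length vs \<le> n" "set vs \<subseteq> Basis" for v vs x
  proof -
    have "length (vs @ [v]) \<le> Suc n" "set (vs @ [v]) \<subseteq> Basis" using that by auto
    then show ?thesis using f unfolding differentiable_upto_def by fastforce
  qed
  moreover have "f differentiable (at x)" for x
    using f[unfolded differentiable_upto_def, rule_format, of "[]"] by simp
  ultimately show "(\<forall>x. f differentiable (at x)) \<and> (\<forall>v\<in>Basis. differentiable_upto n (dd v f))"
    unfolding differentiable_upto_def by blast
next
  assume f: "(\<forall>x. f differentiable (at x)) \<and> (\<forall>v\<in>Basis. differentiable_upto n (dd v f))"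
  show "differentiable_upto (Suc n) f" unfolding differentiable_upto_def
  proof (intro allI impI)
    fix vs :: "'a list" and x assume "length vs \<le> Suc n" "set vs \<subseteq> Basis"
    then show "foldr dd vs f differentiable (at x)"
      using f unfolding differentiable_upto_def by (cases vs rule: rev_exhaust) auto
  qed
qed

lemma differentiable_upto_SucD: "differentiable_upto (Suc n) f \<Longrightarrow> differentiable_upto n f"
  unfolding differentiable_upto_def by auto

lemma differentiable_upto_differentiable: "differentiable_upto n f \<Longrightarrow> f differentiable (at x)"
  by (cases n) (auto simp: differentiable_upto_0 differentiable_upto_Suc)

lemma smooth_fn_iff_dd:
  "smooth_fn f \<longleftrightarrow> (\<forall>x. f differentiable (at x)) \<and> (\<forall>v\<in>Basis. smooth_fn (dd v f))"
  unfolding smooth_fn_iff_differentiable_upto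
  by (metis differentiable_upto_Suc differentiable_upto_SucD)

lemma smooth_fn_differentiable: "smooth_fn f \<Longrightarrow> f differentiable (at x)"
  using smooth_fn_iff_dd by blast

lemma smooth_fn_dd: "smooth_fn f \<Longrightarrow> v \<in> Basis \<Longrightarrow> smooth_fn (dd v f)"
  using smooth_fn_iff_dd by blast

lemma smooth_fn_isCont: "smooth_fn f \<Longrightarrow> isCont f x"
  by (simp add: differentiable_imp_continuous_within smooth_fn_differentiable)

lemma smooth_fn_continuous_on: "smooth_fn f \<Longrightarrow> continuous_on S f"
  by (simp add: continuous_at_imp_continuous_on smooth_fn_isCont)

lemma dd_const: "dd v (\<lambda>x. c) = (\<lambda>x. 0)"
  by (rule ext, rule dd_eqI) simp

lemma dd_add:
  "(\<And>x. f differentiable (at x)) \<Longrightarrow> (\<And>x. g differentiable (at x)) \<Longrightarrow>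
   dd v (\<lambda>x. f x + g x) = (\<lambda>x. dd v f x + dd v g x)"
  by (rule ext, rule dd_eqI) (intro has_derivative_add has_derivative_dd)

lemma dd_mult:
  "(\<And>x. f differentiable (at x)) \<Longrightarrow> (\<And>x. g differentiable (at x)) \<Longrightarrow>
   dd v (\<lambda>x. f x * g x) = (\<lambda>x. dd v f x * g x + f x * dd v g x)"
  by (rule ext, subst dd_eqI[OF has_derivative_mult[OF has_derivative_dd has_derivative_dd]])
    (simp_all add: add.commute)

lemma dd_sum:
  "finite I \<Longrightarrow> (\<And>i x. i \<in> I \<Longrightarrow> f i differentiable (at x)) \<Longrightarrow>
   dd v (\<lambda>x. \<Sum>i\<in>I. f i x) = (\<lambda>x. \<Sum>i\<in>I. dd v (f i) x)"
  by (rule ext, rule dd_eqI) (intro has_derivative_sum has_derivative_dd)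

lemma differentiable_upto_const: "differentiable_upto n (\<lambda>x. c)"
  by (induction n arbitrary: c) (auto simp: differentiable_upto_0 differentiable_upto_Suc dd_const)

lemma differentiable_upto_add:
  "differentiable_upto n f \<Longrightarrow> differentiable_upto n g \<Longrightarrow> differentiable_upto n (\<lambda>x. f x + g x)"
proof (induction n arbitrary: f g)
  case 0 then show ?case by (auto simp: differentiable_upto_0)
next
  case (Suc n)
  then show ?case
    using differentiable_upto_differentiable[OF Suc.prems(1)]
      differentiable_upto_differentiable[OF Suc.prems(2)]
    by (auto simp: differentiable_upto_Suc dd_add)
qed

lemma differentiable_upto_mult:
  "differentiable_upto n f \<Longrightarrow> differentiable_upto n g \<Longrightarrow> differentiable_upto n (\<lambda>x. f x * g x)"
proof (induction n arbitrary: f g)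
  case 0 then show ?case by (auto simp: differentiable_upto_0)
next
  case (Suc n)
  have df: "\<And>x. f differentiable (at x)" and dg: "\<And>x. g differentiable (at x)"
    using Suc.prems by (auto intro: differentiable_upto_differentiable)
  have "differentiable_upto n (dd v (\<lambda>x. f x * g x))" if "v \<in> Basis" for v
    using Suc.prems that unfolding dd_mult[OF df dg]
    by (intro differentiable_upto_add Suc.IH)
      (auto simp: differentiable_upto_Suc intro: differentiable_upto_SucD)
  then show ?case using df dg by (auto simp: differentiable_upto_Suc)
qed

lemma differentiable_upto_sum:
  "finite I \<Longrightarrow> (\<And>i. i \<in> I \<Longrightarrow> differentiable_upto n (f i)) \<Longrightarrow>
   differentiable_upto n (\<lambda>x. \<Sum>i\<in>I. f i x)"
  by (induction I rule: finite_induct) (auto intro: differentiable_upto_add differentiable_upto_const)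

lemma smooth_fn_const [simp]: "smooth_fn (\<lambda>x. c)"
  by (simp add: smooth_fn_iff_differentiable_upto differentiable_upto_const)

lemma smooth_fn_add: "smooth_fn f \<Longrightarrow> smooth_fn g \<Longrightarrow> smooth_fn (\<lambda>x. f x + g x)"
  by (simp add: smooth_fn_iff_differentiable_upto differentiable_upto_add)

lemma smooth_fn_mult: "smooth_fn f \<Longrightarrow> smooth_fn g \<Longrightarrow> smooth_fn (\<lambda>x. f x * g x)"
  by (simp add: smooth_fn_iff_differentiable_upto differentiable_upto_mult)

lemma smooth_fn_sum:
  "finite I \<Longrightarrow> (\<And>i. i \<in> I \<Longrightarrow> smooth_fn (f i)) \<Longrightarrow> smooth_fn (\<lambda>x. \<Sum>i\<in>I. f i x)"
  by (simp add: smooth_fn_iff_differentiable_upto differentiable_upto_sum)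

lemma smooth_fn_prod:
  "finite I \<Longrightarrow> (\<And>i. i \<in> I \<Longrightarrow> smooth_fn (f i)) \<Longrightarrow> smooth_fn (\<lambda>x. \<Prod>i\<in>I. f i x)"
  by (induction I rule: finite_induct) (auto intro: smooth_fn_mult)

lemma smooth_fn_diff: "smooth_fn f \<Longrightarrow> smooth_fn g \<Longrightarrow> smooth_fn (\<lambda>x. f x - g x)"
  using smooth_fn_add[of f "\<lambda>x. (-1) * g x"] smooth_fn_mult[of "\<lambda>x. -1" g] by simp

lemma smooth_fn_uminus: "smooth_fn f \<Longrightarrow> smooth_fn (\<lambda>x. - f x)"
  using smooth_fn_diff[of "\<lambda>x. 0" f] by simp

lemma smooth_fn_divide: "smooth_fn f \<Longrightarrow> smooth_fn (\<lambda>x. f x / c)"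
  using smooth_fn_mult[of f "\<lambda>x. inverse c"] by (simp add: divide_inverse)

lemma has_derivative_compose_affine:
  fixes K :: "'b::euclidean_space \<Rightarrow> real" and L :: "'a::euclidean_space \<Rightarrow> 'b"
  assumes "linear L" "K differentiable (at (L x + c))"
  shows "((\<lambda>x. K (L x + c)) has_derivative (\<lambda>v. dd (L v) K (L x + c))) (at x)"
proof -
  have "((\<lambda>x. L x + c) has_derivative L) (at x)"
    using linear_imp_has_derivative[OF assms(1)] by (rule has_derivative_add_const)
  from has_derivative_compose[OF this has_derivative_dd[OF assms(2)]] show ?thesis .
qed

lemma differentiable_upto_compose_affine:
  fixes K :: "'b::euclidean_space \<Rightarrow> real" and L :: "'a::euclidean_space \<Rightarrow> 'b"
  assumes L: "linear L"
  shows "differentiable_upto n K \<Longrightarrow> differentiable_upto n (\<lambda>x. K (L x + c))"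
proof (induction n arbitrary: K)
  case 0
  then have "(\<lambda>x. K (L x + c)) differentiable (at x)" for x
    using differentiableI[OF has_derivative_compose_affine[OF L]] differentiable_upto_differentiable
    by blast
  then show ?case by (simp add: differentiable_upto_0)
next
  case (Suc n)
  have dK: "\<And>y. K differentiable (at y)" using Suc.prems differentiable_upto_differentiable by blast
  have diff: "(\<lambda>x. K (L x + c)) differentiable (at x)" for x
    using differentiableI[OF has_derivative_compose_affine[OF L dK]] .
  have "dd v (\<lambda>x. K (L x + c)) = (\<lambda>x. \<Sum>b\<in>Basis. (L v \<bullet> b) * dd b K (L x + c))" for v
  proof
    fix x
    have "dd v (\<lambda>x. K (L x + c)) x = dd (L v) K (L x + c)"
      by (rule dd_eqI[OF has_derivative_compose_affine[OF L dK]])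
    also have "\<dots> = (\<Sum>b\<in>Basis. (L v \<bullet> b) * dd b K (L x + c))"
      by (rule dd_linear_direction[OF dK])
    finally show "dd v (\<lambda>x. K (L x + c)) x = (\<Sum>b\<in>Basis. (L v \<bullet> b) * dd b K (L x + c))" .
  qed
  moreover have "differentiable_upto n (\<lambda>x. \<Sum>b\<in>Basis. (L v \<bullet> b) * dd b K (L x + c))" for v
  proof -
    have "differentiable_upto n (\<lambda>x. dd b K (L x + c))" if "b \<in> Basis" for b
      using Suc.prems that by (simp add: differentiable_upto_Suc Suc.IH)
    then show ?thesis
      by (intro differentiable_upto_sum differentiable_upto_mult[OF differentiable_upto_const]) auto
  qed
  ultimately show ?case using diff by (simp add: differentiable_upto_Suc)
qed

lemma smooth_fn_compose_affine:
  "linear L \<Longrightarrow> smooth_fn K \<Longrightarrow> smooth_fn (\<lambda>x. K (L x + c))"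
  by (simp add: smooth_fn_iff_differentiable_upto differentiable_upto_compose_affine)

lemma smooth_fn_slice: "smooth_fn K \<Longrightarrow> smooth_fn (\<lambda>z. K (t, z))"
  using smooth_fn_compose_affine[of "\<lambda>z. (0, z)" K "(t, 0)"]
  by (simp add: linear_iff)

lemma axis_in_Basis [simp]: "axis i (1::real) \<in> (Basis :: (real^'n) set)"
  by (auto simp: Basis_vec_def)

lemma smooth_fn_sp: "smooth_fn f \<Longrightarrow> smooth_fn (sp i f)"
  unfolding sp_def by (rule smooth_fn_dd) simp_all

lemma sp_const: "sp i (\<lambda>x. c) = (\<lambda>x. 0)"
  by (simp add: sp_def dd_const)

lemma sp_add: "smooth_fn f \<Longrightarrow> smooth_fn g \<Longrightarrow> sp i (\<lambda>x. f x + g x) = (\<lambda>x. sp i f x + sp i g x)"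
  unfolding sp_def by (rule dd_add) (auto intro: smooth_fn_differentiable)

lemma sp_mult:
  "smooth_fn f \<Longrightarrow> smooth_fn g \<Longrightarrow> sp i (\<lambda>x. f x * g x) = (\<lambda>x. sp i f x * g x + f x * sp i g x)"
  unfolding sp_def by (rule dd_mult) (auto intro: smooth_fn_differentiable)

lemma sp_sum:
  "finite I \<Longrightarrow> (\<And>j. j \<in> I \<Longrightarrow> smooth_fn (f j)) \<Longrightarrow>
   sp i (\<lambda>x. \<Sum>j\<in>I. f j x) = (\<lambda>x. \<Sum>j\<in>I. sp i (f j) x)"
  unfolding sp_def by (rule dd_sum) (auto intro: smooth_fn_differentiable)

lemma sp_uminus: "smooth_fn f \<Longrightarrow> sp i (\<lambda>x. - f x) = (\<lambda>x. - sp i f x)"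
  using sp_mult[of "\<lambda>x. -1" f i] by (simp add: sp_const smooth_fn_const)

lemma sp_diff: "smooth_fn f \<Longrightarrow> smooth_fn g \<Longrightarrow> sp i (\<lambda>x. f x - g x) = (\<lambda>x. sp i f x - sp i g x)"
  using sp_add[of f "\<lambda>x. - g x" i] by (simp add: sp_uminus smooth_fn_uminus)

lemma sp_divide: "smooth_fn f \<Longrightarrow> sp i (\<lambda>x. f x / c) = (\<lambda>x. sp i f x / c)"
  using sp_mult[of f "\<lambda>x. inverse c" i] by (simp add: sp_const divide_inverse)

lemmas calculus_simps = sp_const sp_add sp_diff sp_uminus sp_mult sp_divide sp_sum
  smooth_fn_add smooth_fn_diff smooth_fn_uminus smooth_fn_mult smooth_fn_divide smooth_fn_sum smooth_fn_sp

lemma test_fn_smooth: "test_fn f \<Longrightarrow> smooth_fn f"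
  unfolding test_fn_def by blast

lemma test_fn_zero [simp]: "test_fn (\<lambda>x. 0)"
  unfolding test_fn_def by simp

lemma dd_eq_0_outside_closure_support:
  assumes "x \<notin> closure {x. f x \<noteq> 0}"
  shows "dd v f x = 0"
proof -
  have "open (- closure {x. f x \<noteq> 0})" "x \<in> - closure {x. f x \<noteq> 0}" using assms by auto
  moreover have "0 = f y" if "y \<in> - closure {x. f x \<noteq> 0}" for y
    using that closure_subset[of "{x. f x \<noteq> 0}"] by auto
  ultimately have "(f has_derivative (\<lambda>h. 0)) (at x)"
    by (rule has_derivative_transform_within_open[of "\<lambda>x. 0", OF has_derivative_const])
  then show ?thesis by (rule dd_eqI)
qed

lemma test_fn_dd:
  assumes "test_fn f" "v \<in> Basis"
  shows "test_fn (dd v f)"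
proof -
  have "{x. dd v f x \<noteq> 0} \<subseteq> closure {x. f x \<noteq> 0}"
    using dd_eq_0_outside_closure_support by blast
  moreover have "bounded (closure {x. f x \<noteq> 0})" using assms(1) by (simp add: test_fn_def bounded_closure)
  ultimately show ?thesis
    using assms smooth_fn_dd bounded_subset unfolding test_fn_def by blast
qed

lemma test_fn_sp: "test_fn f \<Longrightarrow> test_fn (sp i f)"
  unfolding sp_def by (rule test_fn_dd) simp_all

lemma test_fn_mult_smooth: "test_fn f \<Longrightarrow> smooth_fn g \<Longrightarrow> test_fn (\<lambda>x. f x * g x)"
  unfolding test_fn_def
  using smooth_fn_mult bounded_subset[of "{x. f x \<noteq> 0}" "{x. f x * g x \<noteq> 0}"] by auto

lemma test_fn_vanishes_outside_cbox:
  assumes "test_fn f"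
  obtains b where "\<And>x. x \<notin> cbox (-b) b \<Longrightarrow> f x = 0"
proof -
  obtain b where "{x. f x \<noteq> 0} \<subseteq> cbox (-b) b"
    using assms bounded_subset_cbox_symmetric unfolding test_fn_def by blast
  then show ?thesis using that by blast
qed

lemma test_fn_bounded:
  assumes "test_fn f"
  obtains M where "\<And>x. \<bar>f x\<bar> \<le> M"
proof -
  obtain b where b: "\<And>x. x \<notin> cbox (-b) b \<Longrightarrow> f x = 0"
    using test_fn_vanishes_outside_cbox[OF assms] by blast
  have "compact (f ` cbox (-b) b)"
    using smooth_fn_continuous_on[OF test_fn_smooth[OF assms]] by (rule compact_continuous_image) simp
  then have "bounded (f ` cbox (-b) b)" by (rule compact_imp_bounded)
  then obtain B where B: "\<And>y. y \<in> f ` cbox (-b) b \<Longrightarrow> norm y \<le> B"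
    unfolding bounded_iff by blast
  have "\<bar>f x\<bar> \<le> max B 0" for x
    using B[of "f x"] b[of x] by (cases "x \<in> cbox (-b) b") auto
  then show ?thesis using that by blast
qed

lemma integrable_continuous_mult_test_fn:
  assumes "continuous_on UNIV g" "test_fn f"
  shows "(\<lambda>x. g x * f x) integrable_on UNIV"
proof -
  obtain b where b: "\<And>x. x \<notin> cbox (-b) b \<Longrightarrow> f x = 0"
    using test_fn_vanishes_outside_cbox[OF assms(2)] by blast
  have "continuous_on UNIV (\<lambda>x. g x * f x)"
    using assms smooth_fn_continuous_on[OF test_fn_smooth] by (intro continuous_intros) auto
  then have "(\<lambda>x. g x * f x) integrable_on cbox (-b) b"
    by (rule integrable_continuous[OF continuous_on_subset]) simp
  then show ?thesis by (rule integrable_on_superset) (auto simp: b)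
qed

lemma test_fn_integrable: "test_fn f \<Longrightarrow> f integrable_on UNIV"
  using integrable_continuous_mult_test_fn[of "\<lambda>x. 1" f] by simp

section \<open>Integrals of derivatives of test functions\<close>

lemma has_integral_translate:
  fixes f :: "'a::euclidean_space \<Rightarrow> real"
  assumes "continuous_on UNIV f" "\<And>x. x \<notin> cbox a b \<Longrightarrow> f x = 0"
  shows "((\<lambda>x. f (x + c)) has_integral integral UNIV f) UNIV"
proof -
  have f: "(f has_integral integral (cbox a b) f) (cbox a b)"
    using assms(1) integrable_continuous[of a b f] continuous_on_subset by blast
  have "(f has_integral integral (cbox a b) f) UNIV"
    by (rule has_integral_on_superset[OF f]) (use assms(2) in auto)
  then have "integral UNIV f = integral (cbox a b) f" by (rule integral_unique)
  moreover have "((\<lambda>x. f (x + c)) has_integral integral (cbox a b) f) UNIV"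
  proof (rule has_integral_on_superset[OF has_integral_shift_cbox[OF f]])
    fix x assume "x \<notin> cbox (a - c) (b - c)"
    then have "x + c \<notin> cbox a b" by (auto simp: mem_box inner_diff_left inner_add_left algebra_simps)
    then show "f (x + c) = 0" using assms(2) by blast
  qed simp
  ultimately show ?thesis by simp
qed

lemma has_real_derivative_along_line:
  assumes "f differentiable (at (x + s *\<^sub>R v))"
  shows "((\<lambda>s. f (x + s *\<^sub>R v)) has_real_derivative dd v f (x + s *\<^sub>R v)) (at s)"
proof -
  have "((\<lambda>s. x + s *\<^sub>R v) has_derivative (\<lambda>s. s *\<^sub>R v)) (at s)"
    by (auto intro!: derivative_eq_intros)
  from has_derivative_compose[OF this has_derivative_dd[OF assms]]
  have "((\<lambda>s. f (x + s *\<^sub>R v)) has_derivative (\<lambda>h. dd (h *\<^sub>R v) f (x + s *\<^sub>R v))) (at s)" .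
  moreover have "(\<lambda>h. dd (h *\<^sub>R v) f (x + s *\<^sub>R v)) = (\<lambda>h. dd v f (x + s *\<^sub>R v) * h)"
    using linear_cmul[OF has_derivative_linear[OF has_derivative_dd[OF assms]]] by (simp add: mult.commute)
  ultimately show ?thesis by (simp add: has_field_derivative_def)
qed

lemma difference_quotient_bound:
  assumes "\<And>y. f differentiable (at y)" "\<And>y. \<bar>dd v f y\<bar> \<le> M" "h > 0"
  shows "\<bar>(f (x + h *\<^sub>R v) - f x) / h\<bar> \<le> M"
proof -
  obtain s where "f (x + h *\<^sub>R v) - f (x + 0 *\<^sub>R v) = (h - 0) * dd v f (x + s *\<^sub>R v)"
    using MVT2[OF assms(3) has_real_derivative_along_line[OF assms(1)]] by blast
  then show ?thesis using assms(2)[of "x + s *\<^sub>R v"] assms(3) by simp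
qed

lemma integral_dd_test_fn:
  fixes f :: "'a::euclidean_space \<Rightarrow> real"
  assumes f: "test_fn f" and v: "v \<in> Basis"
  shows "integral UNIV (dd v f) = 0"
proof -
  have df: "\<And>x. f differentiable (at x)" using f by (simp add: smooth_fn_differentiable test_fn_smooth)
  obtain r where r: "\<And>x. r \<le> norm x \<Longrightarrow> f x = 0"
    using f bounded_subset_ballD[of "{x. f x \<noteq> 0}" 0] unfolding test_fn_def
    by (metis (mono_tags, lifting) dist_0_norm mem_Collect_eq mem_ball not_le subset_eq)
  obtain a where a: "\<And>x. x \<notin> cbox (-a) a \<Longrightarrow> f x = 0"
    using test_fn_vanishes_outside_cbox[OF f] by blast
  obtain b where b: "cball (0::'a) (r + norm v) \<subseteq> cbox (-b) b"
    using bounded_subset_cbox_symmetric[OF bounded_cball] by blast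
  obtain M where M: "\<And>x. \<bar>dd v f x\<bar> \<le> M" using test_fn_bounded[OF test_fn_dd[OF f v]] by blast
  define h where "h k = 1 / real (Suc k)" for k
  have h: "0 < h k" "h k \<le> 1" for k by (simp_all add: h_def)
  define q where "q k x = (f (x + h k *\<^sub>R v) - f x) / h k" for k x
  have q_int: "(q k has_integral 0) UNIV" for k
  proof -
    have "((\<lambda>x. f (x + h k *\<^sub>R v) - f x) has_integral integral UNIV f - integral UNIV f) UNIV"
      using has_integral_translate[OF smooth_fn_continuous_on[OF test_fn_smooth[OF f]] a]
        test_fn_integrable[OF f] by (intro has_integral_diff) (simp_all add: integrable_integral)
    from has_integral_divide[OF this, of "h k"] show ?thesis by (simp add: q_def[abs_def])
  qed
  define H where "H x = (if x \<in> cbox (-b) b then M else 0)" for x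
  have "H integrable_on UNIV"
    unfolding H_def integrable_restrict_UNIV by (rule integrable_const)
  moreover have "norm (q k x) \<le> H x" for k x
  proof (cases "x \<in> cbox (-b) b")
    case False
    then have "x \<notin> cball 0 (r + norm v)" using b by blast
    then have "r + norm v < norm x" by simp
    moreover have "norm x - h k * norm v \<le> norm (x + h k *\<^sub>R v)"
      using norm_triangle_ineq2[of x "- (h k *\<^sub>R v)"] h(1)[of k] by simp
    moreover have "h k * norm v \<le> norm v" using h[of k] by (simp add: mult_left_le_one_le)
    ultimately show ?thesis using False r[of x] r[of "x + h k *\<^sub>R v"] norm_ge_zero[of v]
      by (simp add: q_def H_def)
  qed (use difference_quotient_bound[OF df M h(1)] in \<open>simp add: q_def H_def\<close>)
  moreover have "(\<lambda>k. q k x) \<longlonglongrightarrow> dd v f x" for x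
  proof -
    have "((\<lambda>s. (f (x + s *\<^sub>R v) - f x) / s) \<longlongrightarrow> dd v f x) (at 0)"
      using has_real_derivative_along_line[of f x 0 v] df by (simp add: has_field_derivative_iff)
    moreover have "filterlim h (at 0) sequentially"
      unfolding h_def filterlim_at using LIMSEQ_inverse_real_of_nat by (auto simp: inverse_eq_divide)
    ultimately show ?thesis unfolding q_def by (rule filterlim_compose)
  qed
  ultimately have "(\<lambda>k. integral UNIV (q k)) \<longlonglongrightarrow> integral UNIV (dd v f)"
    by (intro dominated_convergence(2)) (auto intro: has_integral_integrable[OF q_int])
  moreover have "integral UNIV (q k) = 0" for k
    using q_int by (rule integral_unique)
  ultimately show ?thesis using LIMSEQ_unique[OF _ tendsto_const] by simp
qed

definition integrates_to_0 :: "('a::euclidean_space \<Rightarrow> real) \<Rightarrow> bool" where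
  "integrates_to_0 f \<longleftrightarrow> (f has_integral 0) UNIV"

lemma integrates_to_0_sp:
  assumes "test_fn f"
  shows "integrates_to_0 (sp i f)"
proof -
  have "sp i f integrable_on UNIV" using assms by (simp add: test_fn_integrable test_fn_sp)
  moreover have "integral UNIV (sp i f) = 0"
    unfolding sp_def using assms by (rule integral_dd_test_fn) simp
  ultimately show ?thesis by (simp add: integrates_to_0_def has_integral_integrable_integral)
qed

lemma integrates_to_0_add:
  "integrates_to_0 f \<Longrightarrow> integrates_to_0 g \<Longrightarrow> integrates_to_0 (\<lambda>x. f x + g x)"
  unfolding integrates_to_0_def using has_integral_add[of f 0 UNIV g 0] by simp

lemma integrates_to_0_diff:
  "integrates_to_0 f \<Longrightarrow> integrates_to_0 g \<Longrightarrow> integrates_to_0 (\<lambda>x. f x - g x)"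
  unfolding integrates_to_0_def using has_integral_diff[of f 0 UNIV g 0] by simp

lemma integrates_to_0_cmult: "integrates_to_0 f \<Longrightarrow> integrates_to_0 (\<lambda>x. c * f x)"
  unfolding integrates_to_0_def using has_integral_mult_right[of f 0 UNIV c] by simp

lemma integrates_to_0_sum:
  "finite I \<Longrightarrow> (\<And>j. j \<in> I \<Longrightarrow> integrates_to_0 (f j)) \<Longrightarrow> integrates_to_0 (\<lambda>x. \<Sum>j\<in>I. f j x)"
  unfolding integrates_to_0_def using has_integral_sum[of I f "\<lambda>_. 0" UNIV] by simp

lemma integral_add_integrates_to_0:
  assumes "g integrable_on UNIV" "integrates_to_0 h"
  shows "integral UNIV (\<lambda>x. g x + h x) = integral UNIV g"
  using assms integral_add[of g UNIV h] unfolding integrates_to_0_def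
  by (simp add: has_integral_integrable_integral)

section \<open>Symmetry of second derivatives\<close>

lemma second_difference_mvt:
  assumes df: "\<And>y. f differentiable (at y)" and daf: "\<And>y. dd a f differentiable (at y)"
    and h: "0 < h"
  obtains s t where "0 < s" "s < h" "0 < t" "t < h"
    "f (x + h *\<^sub>R a + h *\<^sub>R b) - f (x + h *\<^sub>R a) - f (x + h *\<^sub>R b) + f x
       = h * h * dd b (dd a f) (x + s *\<^sub>R a + t *\<^sub>R b)"
proof -
  define g where "g s = f ((x + h *\<^sub>R b) + s *\<^sub>R a) - f (x + s *\<^sub>R a)" for s
  have "\<exists>s. 0 < s \<and> s < h \<and>
      g h - g 0 = (h - 0) * (dd a f ((x + h *\<^sub>R b) + s *\<^sub>R a) - dd a f (x + s *\<^sub>R a))"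
    by (rule MVT2[OF h]) (unfold g_def, intro DERIV_diff has_real_derivative_along_line df)
  then obtain s where s: "0 < s" "s < h"
    and gs: "g h - g 0 = (h - 0) * (dd a f ((x + h *\<^sub>R b) + s *\<^sub>R a) - dd a f (x + s *\<^sub>R a))"
    by blast
  obtain t where t: "0 < t" "t < h"
    and dat: "dd a f ((x + s *\<^sub>R a) + h *\<^sub>R b) - dd a f ((x + s *\<^sub>R a) + 0 *\<^sub>R b)
      = (h - 0) * dd b (dd a f) ((x + s *\<^sub>R a) + t *\<^sub>R b)"
    using MVT2[OF h has_real_derivative_along_line[OF daf]] by blast
  have "(x + h *\<^sub>R b) + s *\<^sub>R a = (x + s *\<^sub>R a) + h *\<^sub>R b" by (simp add: algebra_simps)
  then have "g h - g 0 = h * h * dd b (dd a f) (x + s *\<^sub>R a + t *\<^sub>R b)"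
    using gs dat by (simp only:) simp
  moreover have "g h - g 0 = f (x + h *\<^sub>R a + h *\<^sub>R b) - f (x + h *\<^sub>R a) - f (x + h *\<^sub>R b) + f x"
    unfolding g_def by (simp add: algebra_simps)
  ultimately show ?thesis using that s t by metis
qed

lemma second_difference_quotient_near:
  fixes f :: "'a::euclidean_space \<Rightarrow> real"
  assumes f: "smooth_fn f" and a: "a \<in> Basis" and b: "b \<in> Basis" and "e > 0"
  obtains \<delta> where "\<delta> > 0" "\<And>h. 0 < h \<Longrightarrow> h < \<delta> \<Longrightarrow>
    \<bar>(f (x + h *\<^sub>R a + h *\<^sub>R b) - f (x + h *\<^sub>R a) - f (x + h *\<^sub>R b) + f x) / (h * h)
      - dd b (dd a f) x\<bar> < e"
proof -
  have df: "\<And>y. f differentiable (at y)" and daf: "\<And>y. dd a f differentiable (at y)"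
    using f a by (auto intro: smooth_fn_differentiable smooth_fn_dd)
  have "isCont (dd b (dd a f)) x" using f a b by (auto intro: smooth_fn_isCont smooth_fn_dd)
  then obtain \<delta> where "\<delta> > 0" and \<delta>: "\<And>y. dist y x < \<delta> \<Longrightarrow> dist (dd b (dd a f) y) (dd b (dd a f) x) < e"
    using \<open>e > 0\<close> unfolding continuous_at_eps_delta by blast
  show ?thesis
  proof
    show "\<delta> / 2 > 0" using \<open>\<delta> > 0\<close> by simp
    fix h assume h: "0 < h" "h < \<delta> / 2"
    obtain s t where st: "0 < s" "s < h" "0 < t" "t < h"
      and eq: "f (x + h *\<^sub>R a + h *\<^sub>R b) - f (x + h *\<^sub>R a) - f (x + h *\<^sub>R b) + f x
        = h * h * dd b (dd a f) (x + s *\<^sub>R a + t *\<^sub>R b)"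
      using second_difference_mvt[OF df daf h(1)] by blast
    have "dist (x + s *\<^sub>R a + t *\<^sub>R b) x \<le> norm (s *\<^sub>R a) + norm (t *\<^sub>R b)"
      using norm_triangle_ineq[of "s *\<^sub>R a" "t *\<^sub>R b"] by (simp add: dist_norm)
    also have "\<dots> < \<delta>" using st h a b by simp
    finally show "\<bar>(f (x + h *\<^sub>R a + h *\<^sub>R b) - f (x + h *\<^sub>R a) - f (x + h *\<^sub>R b) + f x) / (h * h)
      - dd b (dd a f) x\<bar> < e"
      using \<delta> h(1) by (simp add: eq dist_real_def)
  qed
qed

lemma dd_commute:
  fixes f :: "'a::euclidean_space \<Rightarrow> real"
  assumes f: "smooth_fn f" and a: "a \<in> Basis" and b: "b \<in> Basis"
  shows "dd b (dd a f) = dd a (dd b f)"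
proof
  fix x
  show "dd b (dd a f) x = dd a (dd b f) x"
  proof (rule ccontr)
    define e where "e = \<bar>dd b (dd a f) x - dd a (dd b f) x\<bar> / 2"
    assume "dd b (dd a f) x \<noteq> dd a (dd b f) x"
    then have "e > 0" by (simp add: e_def)
    obtain \<delta>1 where "\<delta>1 > 0" and \<delta>1: "\<And>h. 0 < h \<Longrightarrow> h < \<delta>1 \<Longrightarrow>
      \<bar>(f (x + h *\<^sub>R a + h *\<^sub>R b) - f (x + h *\<^sub>R a) - f (x + h *\<^sub>R b) + f x) / (h * h)
        - dd b (dd a f) x\<bar> < e"
      using second_difference_quotient_near[OF f a b \<open>e > 0\<close>] by blast
    obtain \<delta>2 where "\<delta>2 > 0" and \<delta>2: "\<And>h. 0 < h \<Longrightarrow> h < \<delta>2 \<Longrightarrow>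
      \<bar>(f (x + h *\<^sub>R b + h *\<^sub>R a) - f (x + h *\<^sub>R b) - f (x + h *\<^sub>R a) + f x) / (h * h)
        - dd a (dd b f) x\<bar> < e"
      using second_difference_quotient_near[OF f b a \<open>e > 0\<close>] by blast
    define h where "h = min \<delta>1 \<delta>2 / 2"
    have "0 < h" "h < \<delta>1" "h < \<delta>2" using \<open>\<delta>1 > 0\<close> \<open>\<delta>2 > 0\<close> by (auto simp: h_def)
    then have "\<bar>dd b (dd a f) x - dd a (dd b f) x\<bar> < 2 * e"
      using \<delta>1[of h] \<delta>2[of h] by (simp add: algebra_simps abs_diff_less_iff)
    then show False by (simp add: e_def)
  qed
qed

lemma sp_commute: "smooth_fn f \<Longrightarrow> sp i (sp l f) = sp l (sp i f)"
  unfolding sp_def by (rule dd_commute) simp_all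

section \<open>Smooth bump functions\<close>

definition flat_step :: "real poly \<Rightarrow> real \<Rightarrow> real" where
  "flat_step p s = (if s > 0 then poly p (inverse s) * exp (- inverse s) else 0)"

(* (p(1/s) e^(-1/s))' = q(1/s) e^(-1/s) with q = X^2 (p - p') *)
definition flat_step_deriv_poly :: "real poly \<Rightarrow> real poly" where
  "flat_step_deriv_poly p = pCons 0 (pCons 0 (p - pderiv p))"

lemma poly_times_exp_neg_tendsto_0:
  fixes p :: "real poly"
  shows "((\<lambda>y. poly p y * exp (- y)) \<longlongrightarrow> 0) at_top"
proof -
  have "((\<lambda>y. \<Sum>i\<le>degree p. coeff p i * (y ^ i / exp y)) \<longlongrightarrow> (\<Sum>i\<le>degree p. coeff p i * 0)) at_top"
    by (intro tendsto_sum tendsto_mult tendsto_const tendsto_power_div_exp_0)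
  moreover have "poly p y * exp (- y) = (\<Sum>i\<le>degree p. coeff p i * (y ^ i / exp y))" for y
    by (simp add: poly_altdef sum_divide_distrib exp_minus field_simps)
  ultimately show ?thesis by simp
qed

lemma flat_step_has_real_derivative_pos:
  assumes "s > 0"
  shows "(flat_step p has_real_derivative flat_step (flat_step_deriv_poly p) s) (at s)"
proof -
  have inv: "(inverse has_real_derivative - inverse (s^2)) (at s)"
    using DERIV_inverse[of s] assms by (simp add: power2_eq_square)
  have "((\<lambda>s. poly p (inverse s)) has_real_derivative poly (pderiv p) (inverse s) * (- inverse (s^2))) (at s)"
    using DERIV_chain2[OF poly_DERIV inv] by simp
  moreover have "((\<lambda>s. exp (- inverse s)) has_real_derivative exp (- inverse s) * inverse (s^2)) (at s)"
    using DERIV_chain2[OF DERIV_exp DERIV_minus[OF inv]] by simp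
  ultimately have "((\<lambda>s. poly p (inverse s) * exp (- inverse s)) has_real_derivative
      poly (pderiv p) (inverse s) * (- inverse (s^2)) * exp (- inverse s)
      + exp (- inverse s) * inverse (s^2) * poly p (inverse s)) (at s)"
    by (rule DERIV_mult)
  moreover have "poly (pderiv p) (inverse s) * (- inverse (s^2)) * exp (- inverse s)
      + exp (- inverse s) * inverse (s^2) * poly p (inverse s) = flat_step (flat_step_deriv_poly p) s"
    using assms by (simp add: flat_step_def flat_step_deriv_poly_def power2_eq_square algebra_simps)
  ultimately have "((\<lambda>s. poly p (inverse s) * exp (- inverse s)) has_real_derivative
      flat_step (flat_step_deriv_poly p) s) (at s)"
    by simp
  then show ?thesis
    by (rule has_field_derivative_transform_within_open[where S="{0<..}"])
      (use assms in \<open>auto simp: flat_step_def\<close>)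
qed

lemma flat_step_has_real_derivative_0:
  "(flat_step p has_real_derivative flat_step (flat_step_deriv_poly p) 0) (at 0)"
proof -
  have "eventually (\<lambda>y. 0 = (flat_step p y - flat_step p 0) / (y - 0)) (at_left (0::real))"
    by (simp add: eventually_at_filter flat_step_def)
  then have left: "((\<lambda>y. (flat_step p y - flat_step p 0) / (y - 0)) \<longlongrightarrow> 0) (at_left 0)"
    by (rule Lim_transform_eventually[OF tendsto_const])
  have "((\<lambda>y. poly (pCons 0 p) (inverse y) * exp (- inverse y)) \<longlongrightarrow> 0) (at_right (0::real))"
    by (rule filterlim_compose[OF poly_times_exp_neg_tendsto_0 filterlim_inverse_at_top_right])
  moreover have "eventually (\<lambda>y. poly (pCons 0 p) (inverse y) * exp (- inverse y)
      = (flat_step p y - flat_step p 0) / (y - 0)) (at_right (0::real))"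
    by (simp add: eventually_at_filter flat_step_def field_simps)
  ultimately have right: "((\<lambda>y. (flat_step p y - flat_step p 0) / (y - 0)) \<longlongrightarrow> 0) (at_right 0)"
    by (rule Lim_transform_eventually)
  have "(flat_step p has_real_derivative 0) (at 0)"
    unfolding has_field_derivative_iff using filterlim_split_at[OF left right] .
  then show ?thesis by (simp add: flat_step_def)
qed

lemma flat_step_has_real_derivative:
  "(flat_step p has_real_derivative flat_step (flat_step_deriv_poly p) s) (at s)"
proof (cases s "0::real" rule: linorder_cases)
  case less
  have "((\<lambda>s. 0) has_real_derivative 0) (at s)" by simp
  then have "(flat_step p has_real_derivative 0) (at s)"
    by (rule has_field_derivative_transform_within_open[where S="{..<0}"]) (use less in \<open>auto simp: flat_step_def\<close>)
  then show ?thesis using less by (simp add: flat_step_def)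
qed (simp_all add: flat_step_has_real_derivative_0 flat_step_has_real_derivative_pos)

lemma smooth_fn_flat_step: "smooth_fn (flat_step p)"
proof -
  have "differentiable_upto n (flat_step p)" for n
  proof (induction n arbitrary: p)
    case 0 then show ?case
      using flat_step_has_real_derivative by (auto simp: differentiable_upto_0 real_differentiable_def)
  next
    case (Suc n)
    have "dd 1 (flat_step p) s = flat_step (flat_step_deriv_poly p) s" for s
      using dd_eqI[OF flat_step_has_real_derivative[unfolded has_field_derivative_def]] by simp
    then have "dd 1 (flat_step p) = flat_step (flat_step_deriv_poly p)" ..
    then show ?case
      using flat_step_has_real_derivative Suc.IH by (auto simp: differentiable_upto_Suc real_differentiable_def)
  qed
  then show ?thesis by (simp add: smooth_fn_iff_differentiable_upto)
qed

lemma smooth_fn_compose_inner: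
  "smooth_fn (\<phi> :: real \<Rightarrow> real) \<Longrightarrow> smooth_fn (\<lambda>x. \<phi> (x \<bullet> w + c))"
  by (rule smooth_fn_compose_affine) (simp_all add: linear_iff inner_add_left)

definition bump :: "real \<Rightarrow> real" where
  "bump s = flat_step 1 (s + 1) * flat_step 1 (1 - s)"

lemma bump_eq: "bump s = (if \<bar>s\<bar> < 1 then exp (- inverse (s + 1)) * exp (- inverse (1 - s)) else 0)"
  by (auto simp: bump_def flat_step_def)

lemma smooth_fn_bump: "smooth_fn bump"
proof -
  have "smooth_fn (\<lambda>s::real. flat_step 1 (s \<bullet> 1 + 1))" "smooth_fn (\<lambda>s::real. flat_step 1 (s \<bullet> (-1) + 1))"
    by (intro smooth_fn_compose_inner smooth_fn_flat_step)+
  then show ?thesis unfolding bump_def by (simp add: smooth_fn_mult inner_real_def)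
qed

lemma exists_bump:
  fixes z :: "'a::euclidean_space"
  assumes "\<rho> > 0"
  obtains B where "test_fn B" "\<And>x. B x \<ge> 0" "B z > 0"
    "\<And>x. B x \<noteq> 0 \<Longrightarrow> x \<in> box (z - \<rho> *\<^sub>R One) (z + \<rho> *\<^sub>R One)"
proof
  define B where "B x = (\<Prod>b\<in>Basis. bump (x \<bullet> (b /\<^sub>R \<rho>) + - (z \<bullet> b / \<rho>)))" for x
  have B_eq: "B x = (\<Prod>b\<in>Basis. bump ((x - z) \<bullet> b / \<rho>))" for x
    unfolding B_def by (simp add: inner_diff_left divide_inverse_commute right_diff_distrib)
  show "B x \<ge> 0" for x unfolding B_eq by (intro prod_nonneg) (simp add: bump_eq)
  show "B z > 0" unfolding B_eq by (intro prod_pos) (simp add: bump_eq)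
  show box: "x \<in> box (z - \<rho> *\<^sub>R One) (z + \<rho> *\<^sub>R One)" if "B x \<noteq> 0" for x
  proof -
    have "\<bar>(x - z) \<bullet> b\<bar> < \<rho>" if "b \<in> Basis" for b
    proof -
      have "bump ((x - z) \<bullet> b / \<rho>) \<noteq> 0"
        using \<open>B x \<noteq> 0\<close> that unfolding B_eq by auto
      then show ?thesis using assms by (auto simp: bump_eq abs_divide split: if_splits)
    qed
    then show ?thesis by (auto simp: mem_box inner_diff_left algebra_simps abs_less_iff)
  qed
  have "smooth_fn B" unfolding B_def
    by (rule smooth_fn_prod) (simp, rule smooth_fn_compose_inner[OF smooth_fn_bump])
  moreover have "{x. B x \<noteq> 0} \<subseteq> box (z - \<rho> *\<^sub>R One) (z + \<rho> *\<^sub>R One)"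
    using box by blast
  then have "bounded {x. B x \<noteq> 0}" by (rule bounded_subset[OF bounded_box])
  ultimately show "test_fn B" by (simp add: test_fn_def)
qed

lemma box_centred_subset_ball:
  fixes x0 :: "'a::euclidean_space" and \<rho> :: real
  shows "box (x0 - \<rho> *\<^sub>R One) (x0 + \<rho> *\<^sub>R One) \<subseteq> ball x0 (real DIM('a) * \<rho>)"
proof
  fix x assume "x \<in> box (x0 - \<rho> *\<^sub>R One) (x0 + \<rho> *\<^sub>R One)"
  then have "\<bar>(x - x0) \<bullet> b\<bar> < \<rho>" if "b \<in> Basis" for b
    using that by (auto simp: mem_box inner_diff_left algebra_simps abs_less_iff)
  then have "norm (x - x0) < (\<Sum>b\<in>(Basis::'a set). \<rho>)"
    using norm_le_l1[of "x - x0"] sum_strict_mono[of Basis "\<lambda>b. \<bar>(x - x0) \<bullet> b\<bar>" "\<lambda>b. \<rho>"]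
    by force
  then show "x \<in> ball x0 (real DIM('a) * \<rho>)" by (simp add: dist_norm norm_minus_commute)
qed

lemma continuous_nonneg_integral_0_imp_0:
  fixes f :: "'a::euclidean_space \<Rightarrow> real"
  assumes "continuous_on UNIV f" "\<And>x. f x \<ge> 0" "\<And>x. x \<notin> box a c \<Longrightarrow> f x = 0"
    and "integral UNIV f = 0" "x0 \<in> box a c"
  shows "f x0 = 0"
proof -
  have cont: "continuous_on (cbox a c) f" using assms(1) by (rule continuous_on_subset) simp
  have "(f has_integral integral (cbox a c) f) UNIV"
    using integrable_continuous[OF cont] assms(3) box_subset_cbox[of a c]
    by (intro has_integral_on_superset[OF integrable_integral]) auto
  then have "(f has_integral 0) (cbox a c)"
    using integrable_continuous[OF cont] assms(4) by (metis integrable_integral integral_unique)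
  then show ?thesis
    using has_integral_0_cbox_imp_0[OF cont] assms(2,5) box_subset_cbox by blast
qed

lemma continuous_eq_0_if_orthogonal_to_test_fns:
  fixes g :: "'a::euclidean_space \<Rightarrow> real"
  assumes g: "continuous_on UNIV g"
    and orth: "\<And>B. test_fn B \<Longrightarrow> integral UNIV (\<lambda>x. g x * B x) = 0"
  shows "g x0 = 0"
proof (rule ccontr)
  assume "g x0 \<noteq> 0"
  define E where "E x = g x0 * g x" for x
  have "E x0 > 0" using \<open>g x0 \<noteq> 0\<close> by (auto simp: E_def zero_less_mult_iff linorder_neq_iff)
  have cE: "continuous_on UNIV E" unfolding E_def by (intro continuous_intros g)
  then obtain \<delta> where "\<delta> > 0" and \<delta>: "\<And>x. dist x x0 < \<delta> \<Longrightarrow> dist (E x) (E x0) < E x0"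
    using \<open>E x0 > 0\<close> unfolding continuous_on_eq_continuous_at[OF open_UNIV] continuous_at_eps_delta
    by blast
  define \<rho> where "\<rho> = \<delta> / DIM('a)"
  define a c where "a = x0 - \<rho> *\<^sub>R One" and "c = x0 + \<rho> *\<^sub>R One"
  have "\<rho> > 0" using \<open>\<delta> > 0\<close> by (simp add: \<rho>_def)
  then obtain B where B: "test_fn B" "\<And>x. B x \<ge> 0" "B x0 > 0"
    and supp: "\<And>x. B x \<noteq> 0 \<Longrightarrow> x \<in> box a c"
    unfolding a_def c_def using exists_bump[where z = x0] by blast
  have "continuous_on UNIV (\<lambda>x. E x * B x)"
    using cE smooth_fn_continuous_on[OF test_fn_smooth[OF B(1)]] by (intro continuous_intros) auto
  moreover have "E x * B x \<ge> 0" for x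
  proof (cases "B x = 0")
    case False
    then have "x \<in> ball x0 (real DIM('a) * \<rho>)"
      using supp box_centred_subset_ball[of x0 \<rho>] unfolding a_def c_def by blast
    then have "E x > 0" using \<delta>[of x] by (auto simp: \<rho>_def dist_commute dist_real_def)
    then show ?thesis using B(2)[of x] by simp
  qed simp
  moreover have "E x * B x = 0" if "x \<notin> box a c" for x
    using supp[of x] that by auto
  moreover have "integral UNIV (\<lambda>x. E x * B x) = 0"
    using orth[OF B(1)] unfolding E_def by (simp add: integral_mult_right mult.assoc)
  moreover have "x0 \<in> box a c" using \<open>\<rho> > 0\<close> by (simp add: a_def c_def mem_box inner_diff_left inner_add_left)
  ultimately have "E x0 * B x0 = 0" by (rule continuous_nonneg_integral_0_imp_0)
  then show False using \<open>E x0 > 0\<close> B(3) by simp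
qed

section \<open>Functional derivatives\<close>

definition pair_density :: "fstate \<Rightarrow> fstate \<Rightarrow> real^3 \<Rightarrow> real" where
  "pair_density D d z = fA0 D z * fA0 d z + (\<Sum>i\<in>UNIV. fA D i z * fA d i z)
     + fP0 D z * fP0 d z + (\<Sum>i\<in>UNIV. fP D i z * fP d i z)"

lemma pair_state_eq_integral: "pair_state D d = integral UNIV (pair_density D d)"
  by (simp add: pair_state_def pair_density_def[abs_def])

lemma test_state_smooth_state: "test_state d \<Longrightarrow> smooth_state d"
  by (auto simp: test_state_def smooth_state_def test_fn_smooth)

lemma integrable_pair_density:
  assumes "cont_state D" "test_state d"
  shows "pair_density D d integrable_on UNIV"
  using assms unfolding pair_density_def[abs_def] cont_state_def test_state_def
  by (intro integrable_add integrable_sum finite_UNIV integrable_continuous_mult_test_fn) auto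

definition dir_A0 :: "(real^3 \<Rightarrow> real) \<Rightarrow> fstate" where
  "dir_A0 b = \<lparr>fA0 = b, fA = (\<lambda>i z. 0), fP0 = (\<lambda>z. 0), fP = (\<lambda>i z. 0)\<rparr>"

definition dir_A :: "3 \<Rightarrow> (real^3 \<Rightarrow> real) \<Rightarrow> fstate" where
  "dir_A j b = \<lparr>fA0 = (\<lambda>z. 0), fA = (\<lambda>i z. if i = j then b z else 0), fP0 = (\<lambda>z. 0), fP = (\<lambda>i z. 0)\<rparr>"

definition dir_P0 :: "(real^3 \<Rightarrow> real) \<Rightarrow> fstate" where
  "dir_P0 b = \<lparr>fA0 = (\<lambda>z. 0), fA = (\<lambda>i z. 0), fP0 = b, fP = (\<lambda>i z. 0)\<rparr>"

definition dir_P :: "3 \<Rightarrow> (real^3 \<Rightarrow> real) \<Rightarrow> fstate" where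
  "dir_P j b = \<lparr>fA0 = (\<lambda>z. 0), fA = (\<lambda>i z. 0), fP0 = (\<lambda>z. 0), fP = (\<lambda>i z. if i = j then b z else 0)\<rparr>"

lemma test_state_dir:
  assumes "test_fn b"
  shows "test_state (dir_A0 b)" "test_state (dir_A j b)" "test_state (dir_P0 b)" "test_state (dir_P j b)"
proof -
  have "test_fn (\<lambda>z. if i = j then b z else 0)" for i using assms by (cases "i = j") simp_all
  then show "test_state (dir_A0 b)" "test_state (dir_A j b)" "test_state (dir_P0 b)" "test_state (dir_P j b)"
    using assms by (simp_all add: test_state_def dir_A0_def dir_A_def dir_P0_def dir_P_def)
qed

lemma pair_state_dir:
  "pair_state D (dir_A0 b) = integral UNIV (\<lambda>z. fA0 D z * b z)"
  "pair_state D (dir_A j b) = integral UNIV (\<lambda>z. fA D j z * b z)"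
  "pair_state D (dir_P0 b) = integral UNIV (\<lambda>z. fP0 D z * b z)"
  "pair_state D (dir_P j b) = integral UNIV (\<lambda>z. fP D j z * b z)"
  by (simp_all add: pair_state_def dir_A0_def dir_A_def dir_P0_def dir_P_def if_distrib[of "(*) _"]
      sum.delta cong: if_cong)

lemma continuous_eq_if_test_integrals_eq:
  fixes g h :: "'a::euclidean_space \<Rightarrow> real"
  assumes "continuous_on UNIV g" "continuous_on UNIV h"
    and "\<And>b. test_fn b \<Longrightarrow> integral UNIV (\<lambda>z. g z * b z) = integral UNIV (\<lambda>z. h z * b z)"
  shows "g = h"
proof
  fix x
  have "integral UNIV (\<lambda>z. (g z - h z) * b z) = 0" if "test_fn b" for b
    using assms(3)[OF that] integral_diff[OF integrable_continuous_mult_test_fn[OF assms(1) that]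
        integrable_continuous_mult_test_fn[OF assms(2) that]]
    by (simp add: left_diff_distrib)
  moreover have "continuous_on UNIV (\<lambda>z. g z - h z)"
    using assms(1,2) by (rule continuous_on_diff)
  ultimately have "g x - h x = 0"
    using continuous_eq_0_if_orthogonal_to_test_fns[of "\<lambda>z. g z - h z"] by blast
  then show "g x = h x" by simp
qed

lemma is_fgrad_unique:
  assumes "is_fgrad F s D" "is_fgrad F s D'"
  shows "D = D'"
proof -
  have pair: "pair_state D d = pair_state D' d" if "test_state d" for d
    using assms that unfolding is_fgrad_def using DERIV_unique by blast
  have "cont_state D" "cont_state D'" using assms by (simp_all add: is_fgrad_def)
  then have "fA0 D = fA0 D'" "fA D j = fA D' j" "fP0 D = fP0 D'" "fP D j = fP D' j" for j
    using pair[OF test_state_dir(1)] pair[OF test_state_dir(2)] pair[OF test_state_dir(3)]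
      pair[OF test_state_dir(4)]
    by (auto simp: cont_state_def pair_state_dir intro!: continuous_eq_if_test_integrals_eq)
  then show ?thesis by (cases D, cases D') auto
qed

lemma fgrad_eqI: "is_fgrad F s D \<Longrightarrow> fgrad F s = D"
  unfolding fgrad_def using is_fgrad_unique by blast

lemma is_fgrad_smearI:
  assumes f: "test_fn f" and rho: "continuous_on UNIV (rho s)" and D: "cont_state D"
    and shift: "\<And>d e x. test_state d \<Longrightarrow> rho (shift_state s e d) x = rho s x + e * L d x"
    and L: "\<And>d. test_state d \<Longrightarrow> continuous_on UNIV (L d)"
    and weak: "\<And>d. test_state d \<Longrightarrow> integral UNIV (\<lambda>x. f x * L d x) = pair_state D d"
  shows "is_fgrad (smear f rho) s D"
  unfolding is_fgrad_def
proof (intro conjI allI impI D)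
  fix d assume d: "test_state d"
  have int: "(\<lambda>x. f x * rho s x) integrable_on UNIV" "(\<lambda>x. f x * L d x) integrable_on UNIV"
    using integrable_continuous_mult_test_fn[OF rho f] integrable_continuous_mult_test_fn[OF L[OF d] f]
    by (simp_all add: mult.commute)
  have "smear f rho (shift_state s e d) = smear f rho s + e * pair_state D d" for e
  proof -
    have "smear f rho (shift_state s e d) = integral UNIV (\<lambda>x. f x * rho s x + e * (f x * L d x))"
      unfolding smear_def shift[OF d] by (simp add: algebra_simps)
    also have "\<dots> = smear f rho s + e * pair_state D d"
      using integral_add[OF int(1) integrable_on_mult_right[OF int(2)]]
      by (simp add: smear_def weak[OF d])
    finally show ?thesis .
  qed
  then have "(\<lambda>e. smear f rho (shift_state s e d)) = (\<lambda>e. smear f rho s + e * pair_state D d)" ..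
  moreover have "((\<lambda>e. smear f rho s + e * pair_state D d) has_real_derivative pair_state D d) (at 0)"
    using DERIV_add[OF DERIV_const DERIV_cmult_right[OF DERIV_ident]] by simp
  ultimately show "((\<lambda>e. smear f rho (shift_state s e d)) has_real_derivative pair_state D d) (at 0)"
    by simp
qed

lemma integral_eq_pair_stateI:
  assumes "cont_state D" "test_state d"
    and "\<And>x. h x = pair_density D d x + R x" "integrates_to_0 R"
  shows "integral UNIV h = pair_state D d"
proof -
  have "h = (\<lambda>x. pair_density D d x + R x)" using assms(3) ..
  then show ?thesis
    using integral_add_integrates_to_0[OF integrable_pair_density[OF assms(1,2)] assms(4)]
    by (simp add: pair_state_eq_integral)
qed

lemma sum_rotate3:
  "(\<Sum>a\<in>A. \<Sum>b\<in>B. \<Sum>c\<in>C. f a b c) = (\<Sum>c\<in>C. \<Sum>a\<in>A. \<Sum>b\<in>B. f a b c)"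
proof -
  have "(\<Sum>a\<in>A. \<Sum>b\<in>B. \<Sum>c\<in>C. f a b c) = (\<Sum>a\<in>A. \<Sum>c\<in>C. \<Sum>b\<in>B. f a b c)"
    by (rule sum.cong[OF refl]) (rule sum.swap)
  also have "\<dots> = (\<Sum>c\<in>C. \<Sum>a\<in>A. \<Sum>b\<in>B. f a b c)" by (rule sum.swap)
  finally show ?thesis .
qed

lemma sum_antisym_sym_eq_0:
  fixes \<theta> :: "real^'n^'n"
  assumes antisym: "\<And>i j. \<theta> $ i $ j = - \<theta> $ j $ i" and sym: "\<And>i j. X i j = X j i"
  shows "(\<Sum>i\<in>UNIV. \<Sum>j\<in>UNIV. \<theta> $ i $ j * X i j) = 0"
proof -
  have "(\<Sum>i\<in>UNIV. \<Sum>j\<in>UNIV. \<theta> $ i $ j * X i j) = (\<Sum>j\<in>UNIV. \<Sum>i\<in>UNIV. \<theta> $ i $ j * X i j)"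
    by (rule sum.swap)
  also have "\<dots> = (\<Sum>j\<in>UNIV. \<Sum>i\<in>UNIV. - (\<theta> $ j $ i * X j i))"
  proof (intro sum.cong refl)
    show "\<theta> $ i $ j * X i j = - (\<theta> $ j $ i * X j i)" for i j
      using antisym[of i j] sym[of i j] by simp
  qed
  also have "\<dots> = - (\<Sum>j\<in>UNIV. \<Sum>i\<in>UNIV. \<theta> $ j $ i * X j i)"
    by (simp add: sum_negf)
  finally show ?thesis by simp
qed

lemma sum_symmetrize:
  fixes T X :: "'a \<Rightarrow> 'a \<Rightarrow> real"
  assumes "\<And>i j. X i j = X j i"
  shows "(\<Sum>i\<in>I. \<Sum>j\<in>I. (T i j + T j i) / 2 * X i j) = (\<Sum>i\<in>I. \<Sum>j\<in>I. T i j * X i j)"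
proof -
  have "(\<Sum>i\<in>I. \<Sum>j\<in>I. T j i * X i j) = (\<Sum>j\<in>I. \<Sum>i\<in>I. T j i * X j i)"
    by (subst sum.swap) (simp add: assms)
  then have swap: "(\<Sum>i\<in>I. \<Sum>j\<in>I. T j i * X i j) = (\<Sum>i\<in>I. \<Sum>j\<in>I. T i j * X i j)" by simp
  have "(\<Sum>i\<in>I. \<Sum>j\<in>I. (T i j + T j i) / 2 * X i j)
      = ((\<Sum>i\<in>I. \<Sum>j\<in>I. T i j * X i j) + (\<Sum>i\<in>I. \<Sum>j\<in>I. T j i * X i j)) / 2"
    by (simp add: add_divide_distrib distrib_right sum.distrib sum_divide_distrib)
  then show ?thesis by (simp add: swap)
qed

section \<open>The smeared constraint phi2\<close>

definition phi2_grad :: "real^3^3 \<Rightarrow> (real \<times> (real^3) \<Rightarrow> real) \<Rightarrow> real \<Rightarrow> (real^3 \<Rightarrow> real) \<Rightarrow> fstate"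
  where "phi2_grad \<theta> J0 t f =
    \<lparr>fA0 = (\<lambda>z. 0),
     fA = (\<lambda>k z. - (1/2) * (\<Sum>l\<in>UNIV. \<theta> $ k $ l * sp l f z) * J0 (t, z)),
     fP0 = (\<lambda>z. 0),
     fP = (\<lambda>i z. - sp i f z)\<rparr>"

context
  fixes \<theta> :: "real^3^3" and J0 :: "real \<times> (real^3) \<Rightarrow> real" and t :: real
  assumes J0_smooth: "smooth_fn J0"
begin

declare smooth_fn_slice[OF J0_smooth, simp]

lemma phi2_shift_state:
  assumes "smooth_state s" "smooth_state d"
  shows "phi2 \<theta> J0 t (shift_state s e d) x = phi2 \<theta> J0 t s x + e * (phi2 \<theta> J0 t d x + J0 (t, x))"
  using assms
  by (simp add: phi2_def shift_state_def smooth_state_def calculus_simps sum.distrib sum_distrib_left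
      algebra_simps)

lemma smooth_fn_phi2: "smooth_state s \<Longrightarrow> smooth_fn (phi2 \<theta> J0 t s)"
  unfolding phi2_def[abs_def] by (simp add: smooth_state_def calculus_simps)

lemma cont_state_phi2_grad: "smooth_fn f \<Longrightarrow> cont_state (phi2_grad \<theta> J0 t f)"
  unfolding cont_state_def phi2_grad_def
  by (auto intro!: smooth_fn_continuous_on simp: calculus_simps)

lemma phi2_first_variation:
  assumes f: "test_fn f" and d: "test_state d"
  shows "integral UNIV (\<lambda>x. f x * (phi2 \<theta> J0 t d x + J0 (t, x))) = pair_state (phi2_grad \<theta> J0 t f) d"
proof (rule integral_eq_pair_stateI)
  have sd: "smooth_state d" using d by (rule test_state_smooth_state)
  define R where "R x = (\<Sum>i\<in>UNIV. sp i (\<lambda>y. f y * fP d i y) x)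
    + (1/2) * (\<Sum>k\<in>UNIV. \<Sum>l\<in>UNIV. \<theta> $ k $ l * sp l (\<lambda>y. f y * (fA d k y * J0 (t, y))) x)" for x
  show "f x * (phi2 \<theta> J0 t d x + J0 (t, x)) = pair_density (phi2_grad \<theta> J0 t f) d x + R x" for x
    using test_fn_smooth[OF f] sd unfolding R_def
    by (simp add: phi2_def pair_density_def phi2_grad_def smooth_state_def calculus_simps sum.distrib
      sum_distrib_left sum_negf sum_divide_distrib algebra_simps)
  have "test_fn (\<lambda>y. f y * fP d i y)" "test_fn (\<lambda>y. f y * (fA d k y * J0 (t, y)))" for i k
    using f sd by (auto intro!: test_fn_mult_smooth simp: smooth_state_def calculus_simps)
  then show "integrates_to_0 R"
    unfolding R_def[abs_def]
    by (intro integrates_to_0_add integrates_to_0_cmult integrates_to_0_sum integrates_to_0_sp) simp_all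
qed (use assms in \<open>simp_all add: cont_state_phi2_grad test_fn_smooth\<close>)

lemma fgrad_smear_phi2:
  assumes "smooth_state s" "test_fn f"
  shows "fgrad (smear f (phi2 \<theta> J0 t)) s = phi2_grad \<theta> J0 t f"
proof (rule fgrad_eqI, rule is_fgrad_smearI)
  show "phi2 \<theta> J0 t (shift_state s e d) x = phi2 \<theta> J0 t s x + e * (phi2 \<theta> J0 t d x + J0 (t, x))"
    if "test_state d" for d e x
    using assms that by (simp add: phi2_shift_state test_state_smooth_state)
  show "continuous_on UNIV (\<lambda>x. phi2 \<theta> J0 t d x + J0 (t, x))" if "test_state d" for d
    using that by (simp add: smooth_fn_continuous_on smooth_fn_phi2 test_state_smooth_state smooth_fn_add)
qed (use assms in \<open>simp_all add: smooth_fn_continuous_on smooth_fn_phi2 cont_state_phi2_grad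
    test_fn_smooth phi2_first_variation\<close>)

end

section \<open>The candidate constraint Phi3\<close>

definition Phi3_grad :: "real^3^3 \<Rightarrow> (real \<times> (real^3) \<Rightarrow> real) \<Rightarrow> (3 \<Rightarrow> real \<times> (real^3) \<Rightarrow> real)
    \<Rightarrow> real \<Rightarrow> (real^3 \<Rightarrow> real) \<Rightarrow> fstate"
  where "Phi3_grad \<theta> J0 J t g =
    \<lparr>fA0 = (\<lambda>z. - (\<Sum>l\<in>UNIV. \<Sum>i\<in>UNIV. \<theta> $ l $ i * sp l (\<lambda>z. g z * sp i (\<lambda>z. J0 (t, z)) z) z)),
     fA = (\<lambda>k z. (\<Sum>l\<in>UNIV. \<Sum>i\<in>UNIV. \<theta> $ l $ i * sp l (\<lambda>z. sp i g z * J k (t, z)) z)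
                + (1/2) * (\<Sum>i\<in>UNIV. \<theta> $ i $ k * sp i g z) * divJ J0 J (t, z)),
     fP0 = (\<lambda>z. 0),
     fP = (\<lambda>i z. 0)\<rparr>"

lemma sum_Sigma_mult_sym:
  assumes "\<And>l k. H l k = H k l"
  shows "(\<Sum>l\<in>UNIV. \<Sum>k\<in>UNIV. Sigma \<theta> J t l k y * H l k)
    = (\<Sum>l\<in>UNIV. \<Sum>k\<in>UNIV. (\<Sum>i\<in>UNIV. \<theta> $ l $ i * sp i (\<lambda>z. J k (t, z)) y) * H l k)"
proof -
  have "Sigma \<theta> J t l k y = ((\<Sum>i\<in>UNIV. \<theta> $ l $ i * sp i (\<lambda>z. J k (t, z)) y)
      + (\<Sum>i\<in>UNIV. \<theta> $ k $ i * sp i (\<lambda>z. J l (t, z)) y)) / 2" for l k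
    by (simp add: Sigma_def sum.distrib)
  then show ?thesis by (simp only:) (rule sum_symmetrize, rule assms)
qed

definition pure_gauge :: "(real^3 \<Rightarrow> real) \<Rightarrow> fstate" where
  "pure_gauge f = \<lparr>fA0 = (\<lambda>z. 0), fA = (\<lambda>i. sp i f), fP0 = (\<lambda>z. 0), fP = (\<lambda>i z. 0)\<rparr>"

lemma test_state_pure_gauge: "test_fn f \<Longrightarrow> test_state (pure_gauge f)"
  by (simp add: test_state_def pure_gauge_def test_fn_sp)

context
  fixes \<theta> :: "real^3^3" and J0 :: "real \<times> (real^3) \<Rightarrow> real" and J :: "3 \<Rightarrow> real \<times> (real^3) \<Rightarrow> real"
    and t :: real
  assumes J0_smooth: "smooth_fn J0" and J_smooth: "\<And>k. smooth_fn (J k)"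
begin

declare smooth_fn_slice[OF J0_smooth, simp] smooth_fn_slice[OF J_smooth, simp]

lemma smooth_fn_divJ_slice [simp]: "smooth_fn (\<lambda>z. divJ J0 J (t, z))"
proof -
  have "smooth_fn (dd b J0)" "smooth_fn (dd b (J i))" if "b \<in> Basis" for b i
    using that J0_smooth J_smooth by (auto intro: smooth_fn_dd)
  then have "smooth_fn (divJ J0 J)"
    unfolding divJ_def[abs_def] by (intro smooth_fn_add smooth_fn_sum) (auto simp: Basis_prod_def)
  then show ?thesis by (rule smooth_fn_slice)
qed

lemma Phi3_shift_state:
  assumes "smooth_state s" "smooth_state d"
  shows "Phi3 \<theta> J0 J t (shift_state s e d) x = Phi3 \<theta> J0 J t s x + e * (Phi3 \<theta> J0 J t d x + divJ J0 J (t, x))"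
  using assms
  by (simp add: Phi3_def shift_state_def smooth_state_def calculus_simps sum.distrib sum_distrib_left
      algebra_simps)

lemma smooth_fn_Phi3: "smooth_state s \<Longrightarrow> smooth_fn (Phi3 \<theta> J0 J t s)"
  unfolding Phi3_def[abs_def] by (simp add: smooth_state_def calculus_simps)

lemma cont_state_Phi3_grad: "smooth_fn g \<Longrightarrow> cont_state (Phi3_grad \<theta> J0 J t g)"
  unfolding cont_state_def Phi3_grad_def
  by (auto intro!: smooth_fn_continuous_on simp: calculus_simps)

lemma Phi3_add_divJ_reorder:
  "Phi3 \<theta> J0 J t d y + divJ J0 J (t, y) =
     (\<Sum>l\<in>UNIV. \<Sum>i\<in>UNIV. \<theta> $ l $ i * sp i (\<lambda>z. J0 (t, z)) y * sp l (fA0 d) y)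
   + (\<Sum>k\<in>UNIV. \<Sum>l\<in>UNIV. \<Sum>i\<in>UNIV. \<theta> $ l $ i * sp i (\<lambda>z. J k (t, z) * sp l (fA d k) z) y)
   - (1/2) * (\<Sum>l\<in>UNIV. \<Sum>i\<in>UNIV. \<theta> $ i $ l * sp i (\<lambda>z. fA d l z * divJ J0 J (t, z)) y)"
proof -
  have "(\<Sum>l\<in>UNIV. \<Sum>i\<in>UNIV. \<Sum>k\<in>UNIV. \<theta> $ l $ i * sp i (\<lambda>z. J k (t, z) * sp l (fA d k) z) y)
      = (\<Sum>k\<in>UNIV. \<Sum>l\<in>UNIV. \<Sum>i\<in>UNIV. \<theta> $ l $ i * sp i (\<lambda>z. J k (t, z) * sp l (fA d k) z) y)"
    by (rule sum_rotate3)
  moreover have "(\<Sum>i\<in>UNIV. \<Sum>l\<in>UNIV. \<theta> $ i $ l * sp i (\<lambda>z. fA d l z * divJ J0 J (t, z)) y)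
      = (\<Sum>l\<in>UNIV. \<Sum>i\<in>UNIV. \<theta> $ i $ l * sp i (\<lambda>z. fA d l z * divJ J0 J (t, z)) y)"
    by (rule sum.swap)
  ultimately show ?thesis by (simp add: Phi3_def)
qed

lemma Phi3_first_variation:
  assumes g: "test_fn g" and d: "test_state d"
  shows "integral UNIV (\<lambda>y. g y * (Phi3 \<theta> J0 J t d y + divJ J0 J (t, y)))
    = pair_state (Phi3_grad \<theta> J0 J t g) d"
proof (rule integral_eq_pair_stateI)
  have sd: "smooth_state d" using d by (rule test_state_smooth_state)
  define R where "R y =
      (\<Sum>l\<in>UNIV. \<Sum>i\<in>UNIV. \<theta> $ l $ i * sp l (\<lambda>z. g z * (sp i (\<lambda>z. J0 (t, z)) z * fA0 d z)) y)
    + (\<Sum>k\<in>UNIV. \<Sum>l\<in>UNIV. \<Sum>i\<in>UNIV. \<theta> $ l $ i * sp i (\<lambda>z. g z * (J k (t, z) * sp l (fA d k) z)) y)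
    - (\<Sum>k\<in>UNIV. \<Sum>l\<in>UNIV. \<Sum>i\<in>UNIV. \<theta> $ l $ i * sp l (\<lambda>z. sp i g z * (J k (t, z) * fA d k z)) y)
    - (1/2) * (\<Sum>l\<in>UNIV. \<Sum>i\<in>UNIV. \<theta> $ i $ l * sp i (\<lambda>z. g z * (fA d l z * divJ J0 J (t, z))) y)"
    for y
  show "g y * (Phi3 \<theta> J0 J t d y + divJ J0 J (t, y)) = pair_density (Phi3_grad \<theta> J0 J t g) d y + R y" for y
    using test_fn_smooth[OF g] sd unfolding R_def Phi3_add_divJ_reorder
    by (simp add: pair_density_def Phi3_grad_def smooth_state_def calculus_simps sum.distrib
      sum_distrib_left sum_distrib_right sum_negf sum_divide_distrib sum_subtractf algebra_simps)
  have "test_fn (\<lambda>z. g z * (sp i (\<lambda>z. J0 (t, z)) z * fA0 d z))"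
    "test_fn (\<lambda>z. g z * (J k (t, z) * sp l (fA d k) z))"
    "test_fn (\<lambda>z. sp i g z * (J k (t, z) * fA d k z))"
    "test_fn (\<lambda>z. g z * (fA d l z * divJ J0 J (t, z)))" for i k l
    using g sd by (auto intro!: test_fn_mult_smooth test_fn_sp simp: smooth_state_def calculus_simps)
  then show "integrates_to_0 R"
    unfolding R_def[abs_def]
    by (intro integrates_to_0_add integrates_to_0_diff integrates_to_0_cmult integrates_to_0_sum
        integrates_to_0_sp) simp_all
qed (use assms in \<open>simp_all add: cont_state_Phi3_grad test_fn_smooth\<close>)

lemma fgrad_smear_Phi3:
  assumes "smooth_state s" "test_fn g"
  shows "fgrad (smear g (Phi3 \<theta> J0 J t)) s = Phi3_grad \<theta> J0 J t g"
proof (rule fgrad_eqI, rule is_fgrad_smearI)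
  show "Phi3 \<theta> J0 J t (shift_state s e d) x = Phi3 \<theta> J0 J t s x + e * (Phi3 \<theta> J0 J t d x + divJ J0 J (t, x))"
    if "test_state d" for d e x
    using assms that by (simp add: Phi3_shift_state test_state_smooth_state)
  show "continuous_on UNIV (\<lambda>x. Phi3 \<theta> J0 J t d x + divJ J0 J (t, x))" if "test_state d" for d
    using that by (simp add: smooth_fn_continuous_on smooth_fn_Phi3 test_state_smooth_state smooth_fn_add)
qed (use assms in \<open>simp_all add: smooth_fn_continuous_on smooth_fn_Phi3 cont_state_Phi3_grad
    test_fn_smooth Phi3_first_variation\<close>)

lemma Phi3_pure_gauge:
  assumes antisym: "\<And>i j. \<theta> $ i $ j = - \<theta> $ j $ i" and f: "smooth_fn f"
  shows "Phi3 \<theta> J0 J t (pure_gauge f) y + divJ J0 J (t, y) =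
    (\<Sum>l\<in>UNIV. \<Sum>k\<in>UNIV. Sigma \<theta> J t l k y * sp l (sp k f) y)
    - (1/2) * (\<Sum>i\<in>UNIV. \<Sum>l\<in>UNIV. \<theta> $ i $ l * sp i (\<lambda>z. divJ J0 J (t, z)) y * sp l f y)"
proof -
  define C where "C = (\<lambda>z. divJ J0 J (t, z))"
  have third_derivatives: "(\<Sum>l\<in>UNIV. \<Sum>i\<in>UNIV. \<theta> $ l $ i * sp i (sp l (sp k f)) y) = 0" for k
    by (rule sum_antisym_sym_eq_0[OF antisym]) (simp add: sp_commute f smooth_fn_sp)
  have "(\<Sum>l\<in>UNIV. \<Sum>i\<in>UNIV. \<theta> $ i $ l * sp i (sp l f) y)
      = (\<Sum>i\<in>UNIV. \<Sum>l\<in>UNIV. \<theta> $ i $ l * sp i (sp l f) y)"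
    by (rule sum.swap)
  also have "\<dots> = 0" by (rule sum_antisym_sym_eq_0[OF antisym]) (simp add: sp_commute f)
  finally have second_derivatives: "(\<Sum>l\<in>UNIV. \<Sum>i\<in>UNIV. \<theta> $ i $ l * sp i (sp l f) y) = 0" .
  have "Phi3 \<theta> J0 J t (pure_gauge f) y + divJ J0 J (t, y) =
      (\<Sum>k\<in>UNIV. \<Sum>l\<in>UNIV. \<Sum>i\<in>UNIV. \<theta> $ l $ i * (sp i (\<lambda>z. J k (t, z)) y * sp l (sp k f) y))
    + (\<Sum>k\<in>UNIV. J k (t, y) * (\<Sum>l\<in>UNIV. \<Sum>i\<in>UNIV. \<theta> $ l $ i * sp i (sp l (sp k f)) y))
    - (1/2) * (C y * (\<Sum>l\<in>UNIV. \<Sum>i\<in>UNIV. \<theta> $ i $ l * sp i (sp l f) y))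
    - (1/2) * (\<Sum>l\<in>UNIV. \<Sum>i\<in>UNIV. \<theta> $ i $ l * (sp l f y * sp i C y))"
    using f unfolding Phi3_add_divJ_reorder C_def
    by (simp add: pure_gauge_def calculus_simps sum.distrib sum_distrib_left algebra_simps)
  also have "\<dots> =
      (\<Sum>k\<in>UNIV. \<Sum>l\<in>UNIV. \<Sum>i\<in>UNIV. \<theta> $ l $ i * (sp i (\<lambda>z. J k (t, z)) y * sp l (sp k f) y))
    - (1/2) * (\<Sum>l\<in>UNIV. \<Sum>i\<in>UNIV. \<theta> $ i $ l * (sp l f y * sp i C y))"
    by (simp add: third_derivatives second_derivatives)
  also have "(\<Sum>k\<in>UNIV. \<Sum>l\<in>UNIV. \<Sum>i\<in>UNIV. \<theta> $ l $ i * (sp i (\<lambda>z. J k (t, z)) y * sp l (sp k f) y))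
      = (\<Sum>l\<in>UNIV. \<Sum>k\<in>UNIV. Sigma \<theta> J t l k y * sp l (sp k f) y)"
    by (subst sum.swap, subst sum_Sigma_mult_sym)
      (simp_all add: sp_commute f sum_distrib_right mult.assoc)
  also have "(\<Sum>l\<in>UNIV. \<Sum>i\<in>UNIV. \<theta> $ i $ l * (sp l f y * sp i C y))
      = (\<Sum>i\<in>UNIV. \<Sum>l\<in>UNIV. \<theta> $ i $ l * sp i C y * sp l f y)"
    by (subst sum.swap) (simp add: mult_ac)
  finally show ?thesis by (simp add: C_def)
qed

end

theorem mainTheorem5:
  fixes \<theta> :: "real^3^3"
    and J0 :: "real \<times> (real^3) \<Rightarrow> real" and J :: "3 \<Rightarrow> real \<times> (real^3) \<Rightarrow> real"
    and t :: real and s :: fstate and f g :: "real^3 \<Rightarrow> real"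
  assumes antisym: "\<And>i j. \<theta> $ i $ j = - \<theta> $ j $ i"
    and J0_smooth: "smooth_fn J0" and J_smooth: "\<And>k. smooth_fn (J k)"
    and s_smooth: "smooth_state s"
    and f_test: "test_fn f" and g_test: "test_fn g"
  shows "pbracket (smear f (phi2 \<theta> J0 t)) (smear g (Phi3 \<theta> J0 J t)) s =
    integral UNIV (\<lambda>y. g y *
       ((\<Sum>l\<in>UNIV. \<Sum>k\<in>UNIV. Sigma \<theta> J t l k y * sp l (sp k f) y)
        - (1/2) * (\<Sum>i\<in>UNIV. \<Sum>l\<in>UNIV.
             \<theta> $ i $ l * sp i (\<lambda>z. divJ J0 J (t, z)) y * sp l f y)))"
proof -
  have "fgrad (smear f (phi2 \<theta> J0 t)) s = phi2_grad \<theta> J0 t f"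
    by (rule fgrad_smear_phi2[OF J0_smooth s_smooth f_test])
  moreover have "fgrad (smear g (Phi3 \<theta> J0 J t)) s = Phi3_grad \<theta> J0 J t g"
    by (rule fgrad_smear_Phi3[OF J0_smooth J_smooth s_smooth g_test])
  \<comment> \<open>only the momentum part -d_i f of the first gradient meets a nonzero component of the second\<close>
  ultimately have "pbracket (smear f (phi2 \<theta> J0 t)) (smear g (Phi3 \<theta> J0 J t)) s
      = pair_state (Phi3_grad \<theta> J0 J t g) (pure_gauge f)"
    by (simp add: pbracket_def pair_state_def phi2_grad_def Phi3_grad_def pure_gauge_def mult.commute)
  also have "\<dots> = integral UNIV (\<lambda>y. g y * (Phi3 \<theta> J0 J t (pure_gauge f) y + divJ J0 J (t, y)))"
    by (rule Phi3_first_variation[OF J0_smooth J_smooth g_test test_state_pure_gauge[OF f_test], symmetric])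
  also have "\<dots> = integral UNIV (\<lambda>y. g y *
       ((\<Sum>l\<in>UNIV. \<Sum>k\<in>UNIV. Sigma \<theta> J t l k y * sp l (sp k f) y)
        - (1/2) * (\<Sum>i\<in>UNIV. \<Sum>l\<in>UNIV.
             \<theta> $ i $ l * sp i (\<lambda>z. divJ J0 J (t, z)) y * sp l f y)))"
    by (simp add: Phi3_pure_gauge[OF J0_smooth J_smooth antisym test_fn_smooth[OF f_test]])
  finally show ?thesis .
qed

end
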